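(* For every real $\nu>1$, the quantity $c_0(\nu):=2\left(\frac{\Gamma(\nu)}{\sqrt{\pi}}\right)^{\frac{2}{2\nu-1}}$ satisfies $$\frac{2\nu}{e}\left(\frac{2}{e}\right)^{\frac{1}{2\nu-1}}\;<\;c_0(\nu)\;<\;\frac{2\nu}{e}.$$
   Context: $\Gamma$ denotes the Euler Gamma function. *)

theory Defs
  imports "HOL-Analysis.Analysis"
begin

end

theory Submission
  imports Defs "HOL-Real_Asymp.Real_Asymp"
begin

(* Write ln Gamma x = (x - 1/2) ln x - x + ln (2 pi) / 2 + mu x with Binet's function mu.
   Then c0 nu = (2 nu / e) exp ((2 mu nu + ln 2 - 1) / (2 nu - 1)), so the two inequalities
   amount to 0 < mu nu < (1 - ln 2) / 2, which follows from the classical bounds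
   0 < mu x <= 1 / (12 x).  The series of ln ((1 + t) / (1 - t)) at t = 1 / (2 x + 1) gives
   0 < mu x - mu (x + 1) <= 1 / (12 x) - 1 / (12 (x + 1)); telescoping, the bounds follow once
   mu (x + n) --> 0.  Gauss's product for Gamma shows that mu (x + n) has a limit independent
   of x, and Legendre's duplication formula forces this limit to be 0. *)

lemma ln_one_plus_inverse_bounds:
  fixes x :: real
  assumes "x > 0"
  shows "1 < (x + 1/2) * ln (1 + 1/x)"
    and "(x + 1/2) * ln (1 + 1/x) \<le> 1 + (1 / (12 * x) - 1 / (12 * (x + 1)))"
proof -
  define y where "y = 1 / (2 * x + 1)"
  have xy: "(2 * x + 1) * y = 1" and y: "y > 0"
    using assms by (auto simp: y_def)
  have x1: "1 + 1/x > 1"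
    using assms by simp
  have y_eq: "(1 + 1/x - 1) / (1 + 1/x + 1) = y"
    using assms by (simp add: y_def field_simps)
  (* With 1 + 1/x = (1 + y) / (1 - y), ln_approx_bounds brackets ln (1 + 1/x) by partial sums of
     2 (y + y^3/3 + ...); the lower bound keeps two terms so that it is strict. *)
  have lower: "2 * y + 2 * y^3 / 3 \<le> ln (1 + 1/x)"
    using ln_approx_bounds[OF x1, of 2] unfolding y_eq by (simp add: eval_nat_numeral)
  have upper: "ln (1 + 1/x) \<le> 2 * y + 2 * (y^3 / (1 - y^2) / 3)"
    using ln_approx_bounds[OF x1, of 1] unfolding y_eq by simp
  have "4 * x * (x + 1) * y^2 + y^2 = ((2 * x + 1) * y)^2"
    by (simp add: algebra_simps power2_eq_square)
  hence "1 - y^2 = 4 * x * (x + 1) * y^2"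
    using xy by simp
  hence "(x + 1/2) * (2 * (y^3 / (1 - y^2) / 3)) = (2 * x + 1) * y / (12 * x * (x + 1))"
    using y assms by (simp add: divide_simps) (simp add: algebra_simps power2_eq_square power3_eq_cube)
  also have "\<dots> = 1 / (12 * x) - 1 / (12 * (x + 1))"
    using xy assms by (simp add: field_simps)
  finally have remainder: "(x + 1/2) * (2 * (y^3 / (1 - y^2) / 3)) = 1 / (12 * x) - 1 / (12 * (x + 1))" .
  have main: "(x + 1/2) * (2 * y) = 1"
    using xy by (simp add: algebra_simps)
  have x_half: "x + 1/2 > 0"
    using assms by simp
  have "1 < (x + 1/2) * (2 * y + 2 * y^3 / 3)"
    using main x_half y by (simp add: distrib_left)
  also have "\<dots> \<le> (x + 1/2) * ln (1 + 1/x)"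
    using x_half by (intro mult_left_mono[OF lower]) simp
  finally show "1 < (x + 1/2) * ln (1 + 1/x)" .
  have "(x + 1/2) * ln (1 + 1/x) \<le> (x + 1/2) * (2 * y + 2 * (y^3 / (1 - y^2) / 3))"
    using x_half by (intro mult_left_mono[OF upper]) simp
  also have "\<dots> = 1 + (1 / (12 * x) - 1 / (12 * (x + 1)))"
    unfolding distrib_left main remainder ..
  finally show "(x + 1/2) * ln (1 + 1/x) \<le> 1 + (1 / (12 * x) - 1 / (12 * (x + 1)))" .
qed

definition binet :: "real \<Rightarrow> real" where
  "binet x = ln (Gamma x) - ((x - 1/2) * ln x - x + ln (2 * pi) / 2)"

lemma binet_diff:
  fixes x :: real
  assumes "x > 0"
  shows "binet x - binet (x + 1) = (x + 1/2) * ln (1 + 1/x) - 1"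
proof -
  have "Gamma (x + 1) = x * Gamma x"
    using assms by (intro Gamma_plus1) auto
  hence Gamma_step: "ln (Gamma (x + 1)) = ln x + ln (Gamma x)"
    using assms by (simp add: ln_mult_pos)
  have "ln (x * (1 + 1/x)) = ln x + ln (1 + 1/x)"
    using assms by (intro ln_mult_pos) (simp_all add: add_pos_pos)
  moreover have "x * (1 + 1/x) = x + 1"
    using assms by (simp add: field_simps)
  ultimately have ln_step: "ln (x + 1) = ln x + ln (1 + 1/x)"
    by simp
  show ?thesis
    unfolding binet_def Gamma_step ln_step by (simp add: algebra_simps)
qed

lemma binet_diff_bounds:
  fixes x :: real
  assumes "x > 0"
  shows "0 < binet x - binet (x + 1)"
    and "binet x - binet (x + 1) \<le> 1 / (12 * x) - 1 / (12 * (x + 1))"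
  using ln_one_plus_inverse_bounds[OF assms] binet_diff[OF assms] by simp_all

lemma binet_diff_le:
  fixes x :: real
  assumes "x > 0"
  shows "0 \<le> binet x - binet (x + real n)"
    and "binet x - binet (x + real n) \<le> 1 / (12 * x) - 1 / (12 * (x + real n))"
proof (induction n)
  case (Suc n)
  have pos: "x + real n > 0" using assms by simp
  have shift: "x + real (Suc n) = (x + real n) + 1" by simp
  show "0 \<le> binet x - binet (x + real (Suc n))"
    and "binet x - binet (x + real (Suc n)) \<le> 1 / (12 * x) - 1 / (12 * (x + real (Suc n)))"
    unfolding shift using binet_diff_bounds[OF pos] Suc.IH by linarith+
qed simp_all

lemma ln_Gamma_shift_LIMSEQ:
  fixes x :: real
  assumes "x > 0"
  shows "(\<lambda>n. ln (Gamma (x + 1 + real n)) - ln (fact n) - x * ln (real n)) \<longlonglongrightarrow> 0"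
proof -
  have "x \<notin> \<int>\<^sub>\<le>\<^sub>0" and Gamma_pos: "Gamma x > 0"
    using assms by auto
  have "(\<lambda>n. ln (Gamma x) - ln (Gamma_series x n)) \<longlonglongrightarrow> ln (Gamma x) - ln (Gamma x)"
    using Gamma_pos by (intro tendsto_intros Gamma_series_LIMSEQ) auto
  moreover have "eventually (\<lambda>n. ln (Gamma x) - ln (Gamma_series x n) =
      ln (Gamma (x + 1 + real n)) - ln (fact n) - x * ln (real n)) sequentially"
    using eventually_gt_at_top[of "0::nat"]
  proof eventually_elim
    case (elim n)
    have "pochhammer x (n + 1) = Gamma (x + 1 + real n) / Gamma x"
      using pochhammer_Gamma[OF \<open>x \<notin> \<int>\<^sub>\<le>\<^sub>0\<close>, of "n + 1"] by (simp add: add_ac)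
    hence "Gamma_series x n = exp (ln (fact n) + x * ln (real n) + ln (Gamma x) - ln (Gamma (x + 1 + real n)))"
      using assms Gamma_pos by (simp add: Gamma_series_def exp_add exp_diff)
    thus ?case by simp
  qed
  ultimately show ?thesis
    by (simp add: tendsto_cong)
qed

lemma binet_shift_LIMSEQ:
  fixes x :: real
  assumes "x > 0"
  shows "(\<lambda>n. binet (x + 1 + real n) - binet (1 + real n)) \<longlonglongrightarrow> 0"
proof -
  have elementary: "(\<lambda>n. x * ln (real n) - (x + real n + 1/2) * ln (x + 1 + real n)
      + (real n + 1/2) * ln (1 + real n) + x) \<longlonglongrightarrow> 0"
    using assms by real_asymp
  have "binet (x + 1 + real n) - binet (1 + real n) =
      (ln (Gamma (x + 1 + real n)) - ln (fact n) - x * ln (real n)) +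
      (x * ln (real n) - (x + real n + 1/2) * ln (x + 1 + real n)
      + (real n + 1/2) * ln (1 + real n) + x)" for n
    using Gamma_fact[of n, where 'a = real] by (simp add: binet_def algebra_simps)
  thus ?thesis
    using tendsto_add[OF ln_Gamma_shift_LIMSEQ[OF assms] elementary] by simp
qed

lemma binet_convergent:
  obtains L where "\<And>x. x > 0 \<Longrightarrow> (\<lambda>n. binet (x + real n)) \<longlonglongrightarrow> L"
proof -
  define X where "X n = binet (1 + real n)" for n
  have "decseq X"
  proof (rule decseq_SucI)
    show "X (Suc n) \<le> X n" for n
      using binet_diff_le(1)[of "1 + real n" 1] by (simp add: X_def add_ac)
  qed
  moreover have "binet 1 - 1/12 \<le> X n" for n
  proof -
    have "0 \<le> 1 / (12 * (1 + real n))" by simp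
    thus ?thesis using binet_diff_le(2)[of 1 n] unfolding X_def by linarith
  qed
  ultimately obtain L where X: "X \<longlonglongrightarrow> L"
    using decseq_convergent by blast
  have "(\<lambda>n. binet (x + real n)) \<longlonglongrightarrow> L" if "x > 0" for x
  proof -
    have "(\<lambda>n. (binet (x + 1 + real n) - binet (1 + real n)) + X n) \<longlonglongrightarrow> 0 + L"
      by (intro tendsto_add binet_shift_LIMSEQ that X)
    hence "(\<lambda>n. binet (x + real (Suc n))) \<longlonglongrightarrow> L"
      by (simp add: X_def add_ac)
    thus ?thesis by (rule LIMSEQ_imp_Suc)
  qed
  with that show ?thesis by blast
qed

lemma Gamma_legendre_duplication_real:
  fixes x :: real
  assumes "x > 0"
  shows "Gamma x * Gamma (x + 1/2) = exp ((1 - 2 * x) * ln 2) * sqrt pi * Gamma (2 * x)"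
proof -
  have "x \<notin> \<int>\<^sub>\<le>\<^sub>0" "x + 1/2 \<notin> \<int>\<^sub>\<le>\<^sub>0"
    using assms by auto
  hence "complex_of_real x \<notin> \<int>\<^sub>\<le>\<^sub>0" "complex_of_real (x + 1/2) \<notin> \<int>\<^sub>\<le>\<^sub>0"
    by (simp_all only: of_real_in_nonpos_Ints_iff not_False_eq_True)
  hence "complex_of_real x \<notin> \<int>\<^sub>\<le>\<^sub>0" "complex_of_real x + 1/2 \<notin> \<int>\<^sub>\<le>\<^sub>0"
    by simp_all
  from Gamma_legendre_duplication[OF this]
  have "complex_of_real (Gamma x * Gamma (x + 1/2)) =
        complex_of_real (exp ((1 - 2 * x) * ln 2) * sqrt pi * Gamma (2 * x))"
    by (simp add: Gamma_complex_of_real[symmetric] exp_of_real[symmetric])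
  thus ?thesis by (simp only: of_real_eq_iff)
qed

lemma binet_duplication:
  fixes x :: real
  assumes "x > 0"
  shows "binet x + binet (x + 1/2) - binet (2 * x) = 1/2 - x * ln (1 + 1 / (2 * x))"
proof -
  have "ln (Gamma x) + ln (Gamma (x + 1/2)) = ln (exp ((1 - 2 * x) * ln 2) * sqrt pi * Gamma (2 * x))"
    using assms by (simp add: ln_mult_pos flip: Gamma_legendre_duplication_real)
  also have "\<dots> = (1 - 2 * x) * ln 2 + ln pi / 2 + ln (Gamma (2 * x))"
    using assms by (simp add: ln_mult_pos ln_sqrt)
  finally have G: "ln (Gamma (2 * x)) = ln (Gamma x) + ln (Gamma (x + 1/2)) - (1 - 2 * x) * ln 2 - ln pi / 2"
    by simp
  have "x + 1/2 = x * (1 + 1 / (2 * x))"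
    using assms by (simp add: field_simps)
  moreover have "ln (x * (1 + 1 / (2 * x))) = ln x + ln (1 + 1 / (2 * x))"
    using assms by (intro ln_mult_pos) (simp_all add: add_pos_pos)
  ultimately have "ln (x + 1/2) = ln x + ln (1 + 1 / (2 * x))"
    by simp
  moreover have "ln (2 * x) = ln 2 + ln x" "ln (2 * pi) = ln 2 + ln pi"
    using assms by (simp_all add: ln_mult_pos)
  ultimately show ?thesis
    unfolding binet_def G by (simp add: algebra_simps diff_divide_distrib)
qed

lemma binet_duplication_LIMSEQ:
  "(\<lambda>n. binet (real n + 1) + binet (real n + 1 + 1/2) - binet (2 * (real n + 1))) \<longlonglongrightarrow> 0"
proof -
  have "binet (real n + 1) + binet (real n + 1 + 1/2) - binet (2 * (real n + 1)) =
        1/2 - (real n + 1) * ln (1 + 1 / (2 * (real n + 1)))" for n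
    by (rule binet_duplication) simp
  thus ?thesis by (simp only:) real_asymp
qed

lemma binet_LIMSEQ:
  fixes x :: real
  assumes "x > 0"
  shows "(\<lambda>n. binet (x + real n)) \<longlonglongrightarrow> 0"
proof -
  obtain L where L: "\<And>x. x > 0 \<Longrightarrow> (\<lambda>n. binet (x + real n)) \<longlonglongrightarrow> L"
    using binet_convergent by blast
  have "(\<lambda>n. binet (1 + real n)) \<longlonglongrightarrow> L" "(\<lambda>n. binet (3/2 + real n)) \<longlonglongrightarrow> L"
    by (simp_all add: L)
  moreover have "(\<lambda>n. binet (1 + real (2 * n + 1))) \<longlonglongrightarrow> L"
    using filterlim_compose[OF L[of 1], of "\<lambda>n. 2 * n + 1"]
    by (simp add: filterlim_subseq strict_mono_Suc_iff)
  ultimately have "(\<lambda>n. binet (real n + 1) + binet (real n + 1 + 1/2) - binet (2 * (real n + 1)))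
      \<longlonglongrightarrow> L + L - L"
    by (intro tendsto_intros) (simp_all add: algebra_simps)
  with binet_duplication_LIMSEQ have "L + L - L = 0"
    using LIMSEQ_unique by blast
  with L[OF assms] show ?thesis by simp
qed

lemma binet_bounds:
  fixes x :: real
  assumes "x > 0"
  shows "0 < binet x" and "binet x \<le> 1 / (12 * x)"
proof -
  have lim: "(\<lambda>n. binet x - binet (x + real n)) \<longlonglongrightarrow> binet x"
    using tendsto_diff[OF tendsto_const binet_LIMSEQ[OF assms]] by simp
  have "binet x - binet (x + 1) \<le> binet x - binet (x + real n)" if "n \<ge> 1" for n
    using binet_diff_le(1)[of "x + 1" "n - 1"] assms that by simp
  hence "binet x - binet (x + 1) \<le> binet x"
    by (intro LIMSEQ_le_const[OF lim]) blast
  thus "0 < binet x"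
    using binet_diff_bounds(1)[OF assms] by linarith
  have "binet x - binet (x + real n) \<le> 1 / (12 * x)" for n
  proof -
    have "0 \<le> 1 / (12 * (x + real n))" using assms by simp
    thus ?thesis using binet_diff_le(2)[OF assms, of n] by linarith
  qed
  thus "binet x \<le> 1 / (12 * x)"
    by (intro LIMSEQ_le_const2[OF lim]) blast
qed

lemma Gamma_over_sqrt_pi_powr_eq:
  fixes \<nu> :: real
  assumes "\<nu> > 1/2"
  shows "(Gamma \<nu> / sqrt pi) powr (2 / (2 * \<nu> - 1)) =
         \<nu> / exp 1 * exp ((2 * binet \<nu> + ln 2 - 1) / (2 * \<nu> - 1))"
proof -
  define s where "s = 2 * \<nu> - 1"
  have s: "s > 0" and \<nu>: "\<nu> = (s + 1) / 2"
    using assms by (simp_all add: s_def)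
  have Gamma_pos: "Gamma \<nu> > 0"
    using assms by simp
  hence "ln (Gamma \<nu> / sqrt pi) = ln (Gamma \<nu>) - ln pi / 2"
    by (simp add: ln_div ln_sqrt)
  also have "\<dots> = binet \<nu> + (\<nu> - 1/2) * ln \<nu> - \<nu> + ln 2 / 2"
    by (simp add: binet_def ln_mult_pos algebra_simps)
  finally have "2 / s * ln (Gamma \<nu> / sqrt pi) = ln \<nu> - 1 + (2 * binet \<nu> + ln 2 - 1) / s"
    using s unfolding \<nu> by (simp add: field_simps)
  thus ?thesis
    using Gamma_pos[THEN order.strict_implies_not_eq] assms unfolding s_def[symmetric]
    by (simp add: powr_def exp_add exp_diff)
qed

theorem mainTheorem8:
  fixes \<nu> :: real
  assumes "\<nu> > 1"
  shows "2 * \<nu> / exp 1 * (2 / exp 1) powr (1 / (2 * \<nu> - 1))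
           < 2 * (Gamma \<nu> / sqrt pi) powr (2 / (2 * \<nu> - 1))
       \<and> 2 * (Gamma \<nu> / sqrt pi) powr (2 / (2 * \<nu> - 1)) < 2 * \<nu> / exp 1"
proof -
  define s where "s = 2 * \<nu> - 1"
  define E where "E = (2 * binet \<nu> + ln 2 - 1) / s"
  have s: "s > 0" and \<nu>: "\<nu> > 0"
    using assms by (simp_all add: s_def)
  have "1 / (12 * \<nu>) < 1/12"
    using assms by (simp add: field_simps)
  hence "0 < binet \<nu>" "binet \<nu> < 1/12"
    using binet_bounds[OF \<nu>] by linarith+
  with ln2_le_25_over_36 s have "(ln 2 - 1) / s < E" "E < 0"
    unfolding E_def by (simp_all add: divide_strict_right_mono divide_neg_pos)
  moreover have "(2 / exp 1) powr (1 / s) = exp ((ln 2 - 1) / s)"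
    by (simp add: powr_def ln_div)
  moreover have "2 * (Gamma \<nu> / sqrt pi) powr (2 / s) = 2 * \<nu> / exp 1 * exp E"
    using Gamma_over_sqrt_pi_powr_eq[of \<nu>] assms by (simp add: s_def E_def)
  ultimately show ?thesis
    using \<nu> unfolding s_def[symmetric] by (simp add: divide_strict_right_mono)
qed

end
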